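(* Let $A=[a_{ij}]\in\mathcal{M}_n(\mathbb{H})$ be an upper triangular nilpotent matrix whose graph $\mathcal{G}_A$ is a tree. Then $W(A)$ is the closed disk centered at the origin $$W(A)=\mathbb{D}_{\mathbb{H}}\Big(0,\ \max_{\beta\in\mathbb{S}^+_{\mathbb{R}^n}}\sum_{i,j=1}^n\beta_i\beta_j|a_{ij}|\Big).$$
   Context: $\mathbb{H}$ denotes the real quaternions, $|q|^2=qq^*$. For $\mathbf{x}\in\mathbb{H}^n$, $\mathbf{x}^*$ is the conjugate transpose and $\mathbb{S}_{\mathbb{H}^n}=\{\mathbf{x}:\mathbf{x}^*\mathbf{x}=1\}$; the numerical range is $W(A)=\{\mathbf{x}^*A\mathbf{x}:\mathbf{x}\in\mathbb{S}_{\mathbb{H}^n}\}$. $\mathbb{D}_{\mathbb{H}}(c,r)=\{q\in\mathbb{H}:|q-c|\le r\}$. $\mathbb{S}^+_{\mathbb{R}^n}=\{\beta\in\mathbb{R}^n:\|\beta\|=1,\ \beta_i\ge0\ \forall i\}$. The graph $\mathcal{G}_A$ of $A=[a_{ij}]$ is the undirected graph on $\{1,\dots,n\}$ with an edge between $i$ and $j$ (a loop if $i=j$) whenever $a_{ij}\ne0$ or $a_{ji}\ne0$; loops count as cycles; $A$ is a tree if $\mathcal{G}_A$ is connected and has no cycles. *)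

theory Defs
  imports "HOL-Analysis.Analysis"
begin

datatype quat = Quat (Re: real) (Im1: real) (Im2: real) (Im3: real)

lemma quat_eqI: "Re a = Re b \<Longrightarrow> Im1 a = Im1 b \<Longrightarrow> Im2 a = Im2 b \<Longrightarrow> Im3 a = Im3 b \<Longrightarrow> a = b"
  by (cases a; cases b) auto

instantiation quat :: ring_1
begin
definition "0 = Quat 0 0 0 0"
definition "1 = Quat 1 0 0 0"
definition "a + b = Quat (Re a + Re b) (Im1 a + Im1 b) (Im2 a + Im2 b) (Im3 a + Im3 b)"
definition "a - b = Quat (Re a - Re b) (Im1 a - Im1 b) (Im2 a - Im2 b) (Im3 a - Im3 b)"
definition "- a = Quat (- Re a) (- Im1 a) (- Im2 a) (- Im3 a)"
definition "a * b = Quat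
   (Re a * Re b - Im1 a * Im1 b - Im2 a * Im2 b - Im3 a * Im3 b)
   (Re a * Im1 b + Im1 a * Re b + Im2 a * Im3 b - Im3 a * Im2 b)
   (Re a * Im2 b - Im1 a * Im3 b + Im2 a * Re b + Im3 a * Im1 b)
   (Re a * Im3 b + Im1 a * Im2 b - Im2 a * Im1 b + Im3 a * Re b)"
instance
  by standard (auto intro!: quat_eqI simp: zero_quat_def one_quat_def plus_quat_def
      minus_quat_def uminus_quat_def times_quat_def algebra_simps)
end

definition qcnj :: "quat \<Rightarrow> quat" where
  "qcnj q = Quat (Re q) (- Im1 q) (- Im2 q) (- Im3 q)"

definition qabs :: "quat \<Rightarrow> real" where
  "qabs q = sqrt ((Re q)\<^sup>2 + (Im1 q)\<^sup>2 + (Im2 q)\<^sup>2 + (Im3 q)\<^sup>2)"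

section \<open>n x n quaternion matrices, indices 0..n-1\<close>

type_synonym qmat = "nat \<Rightarrow> nat \<Rightarrow> quat"
type_synonym qvec = "nat \<Rightarrow> quat"

definition qmat_mult :: "nat \<Rightarrow> qmat \<Rightarrow> qmat \<Rightarrow> qmat" where
  "qmat_mult n A B = (\<lambda>i j. \<Sum>k<n. A i k * B k j)"

definition qmat_one :: "qmat" where
  "qmat_one = (\<lambda>i j. if i = j then 1 else 0)"

fun qmat_pow :: "nat \<Rightarrow> qmat \<Rightarrow> nat \<Rightarrow> qmat" where
  "qmat_pow n A 0 = qmat_one"
| "qmat_pow n A (Suc k) = qmat_mult n (qmat_pow n A k) A"

definition upper_triangular :: "nat \<Rightarrow> qmat \<Rightarrow> bool" where
  "upper_triangular n A \<longleftrightarrow> (\<forall>i<n. \<forall>j<n. j < i \<longrightarrow> A i j = 0)"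

definition nilpotent :: "nat \<Rightarrow> qmat \<Rightarrow> bool" where
  "nilpotent n A \<longleftrightarrow> (\<exists>k. \<forall>i<n. \<forall>j<n. qmat_pow n A k i j = 0)"

text \<open>Adjacency in \<open>G_A\<close> on vertices {0..n-1}; \<open>i = j\<close> gives a loop.\<close>
definition gadj :: "qmat \<Rightarrow> nat \<Rightarrow> nat \<Rightarrow> bool" where
  "gadj A i j \<longleftrightarrow> A i j \<noteq> 0 \<or> A j i \<noteq> 0"

definition graph_connected :: "nat \<Rightarrow> qmat \<Rightarrow> bool" where
  "graph_connected n A \<longleftrightarrow>
     (\<forall>i<n. \<forall>j<n. (i, j) \<in> {(u, v). u < n \<and> v < n \<and> gadj A u v}\<^sup>*)"

definition has_cycle :: "nat \<Rightarrow> qmat \<Rightarrow> bool" where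
  "has_cycle n A \<longleftrightarrow>
     (\<exists>i<n. gadj A i i) \<or>
     (\<exists>vs. length vs \<ge> 3 \<and> distinct vs \<and> set vs \<subseteq> {..<n} \<and>
        (\<forall>k. Suc k < length vs \<longrightarrow> gadj A (vs ! k) (vs ! Suc k)) \<and>
        gadj A (last vs) (hd vs))"

definition is_tree :: "nat \<Rightarrow> qmat \<Rightarrow> bool" where
  "is_tree n A \<longleftrightarrow> graph_connected n A \<and> \<not> has_cycle n A"

definition qsphere :: "nat \<Rightarrow> qvec set" where
  "qsphere n = {x. (\<Sum>i<n. qcnj (x i) * x i) = 1}"

definition num_range :: "nat \<Rightarrow> qmat \<Rightarrow> quat set" where
  "num_range n A = {(\<Sum>i<n. \<Sum>j<n. qcnj (x i) * A i j * x j) | x. x \<in> qsphere n}"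

definition qdisk :: "quat \<Rightarrow> real \<Rightarrow> quat set" where
  "qdisk c r = {q. qabs (q - c) \<le> r}"

definition pos_sphere :: "nat \<Rightarrow> (nat \<Rightarrow> real) set" where
  "pos_sphere n = {\<beta>. sqrt (\<Sum>i<n. (\<beta> i)\<^sup>2) = 1 \<and> (\<forall>i<n. \<beta> i \<ge> 0)}"

end

theory Submission
  imports Defs
begin

text \<open>
  For a unit vector \<open>x\<close>, the triangle inequality bounds \<open>|x\<^sup>* A x|\<close> by
  \<open>f(\<beta>) = \<Sum>\<^sub>i\<^sub>,\<^sub>j \<beta>\<^sub>i \<beta>\<^sub>j |a\<^sub>i\<^sub>j|\<close> at \<open>\<beta>\<^sub>i = |x\<^sub>i|\<close>, hence by the maximum \<open>M\<close> of \<open>f\<close> on the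
  nonnegative unit sphere. Conversely, fix a unit quaternion \<open>p\<close>. Since \<open>\<G>\<^sub>A\<close> is a tree and,
  by upper triangularity, each edge carries a single nonzero entry, unit quaternions \<open>u\<^sub>i\<close>
  can be chosen along the edges so that \<open>u\<^sub>i\<^sup>* a\<^sub>i\<^sub>j u\<^sub>j = |a\<^sub>i\<^sub>j| p\<close> for all \<open>i, j\<close>. Then
  \<open>x\<^sub>i = \<gamma>\<^sub>i u\<^sub>i\<close> gives \<open>x\<^sup>* A x = f(\<gamma>) p\<close>, and \<open>f\<close> takes every value in \<open>[0, M]\<close> on the
  nonnegative sphere because it vanishes at the coordinate vectors (a tree has no loops) and the
  sphere is path connected.
\<close>

section \<open>Quaternion arithmetic\<close>

definition quat_of_real :: "real \<Rightarrow> quat" where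
  "quat_of_real c = Quat c 0 0 0"

lemma quat_of_real_0 [simp]: "quat_of_real 0 = 0"
  by (simp add: quat_of_real_def zero_quat_def)

lemma quat_of_real_1 [simp]: "quat_of_real 1 = 1"
  by (simp add: quat_of_real_def one_quat_def)

lemma quat_of_real_mult: "quat_of_real (a * b) = quat_of_real a * quat_of_real b"
  by (simp add: quat_of_real_def times_quat_def)

lemma quat_of_real_add: "quat_of_real (a + b) = quat_of_real a + quat_of_real b"
  by (simp add: quat_of_real_def plus_quat_def)

lemma quat_of_real_sum: "quat_of_real (\<Sum>i\<in>I. f i) = (\<Sum>i\<in>I. quat_of_real (f i))"
  by (induct I rule: infinite_finite_induct) (simp_all add: quat_of_real_add)

lemma quat_of_real_eq_0_iff [simp]: "quat_of_real c = 0 \<longleftrightarrow> c = 0"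
  by (simp add: quat_of_real_def zero_quat_def)

lemma quat_of_real_inject [simp]: "quat_of_real a = quat_of_real b \<longleftrightarrow> a = b"
  by (simp add: quat_of_real_def)

lemma quat_of_real_commute: "quat_of_real c * q = q * quat_of_real c"
  by (simp add: quat_of_real_def times_quat_def)

lemma qcnj_mult: "qcnj (a * b) = qcnj b * qcnj a"
  by (simp add: qcnj_def times_quat_def algebra_simps)

lemma qcnj_quat_of_real [simp]: "qcnj (quat_of_real c) = quat_of_real c"
  by (simp add: qcnj_def quat_of_real_def)

lemma qcnj_qcnj [simp]: "qcnj (qcnj q) = q"
  by (simp add: qcnj_def)

lemma qcnj_mult_self: "qcnj q * q = quat_of_real ((qabs q)\<^sup>2)"
  by (simp add: qabs_def qcnj_def times_quat_def quat_of_real_def power2_eq_square)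

lemma mult_qcnj_self: "q * qcnj q = quat_of_real ((qabs q)\<^sup>2)"
  by (simp add: qabs_def qcnj_def times_quat_def quat_of_real_def power2_eq_square)

lemma qabs_nonneg [simp]: "0 \<le> qabs q"
  by (simp add: qabs_def)

lemma qabs_eq_0_iff [simp]: "qabs q = 0 \<longleftrightarrow> q = 0"
  by (cases q) (simp add: qabs_def zero_quat_def add_nonneg_eq_0_iff)

lemma qabs_zero [simp]: "qabs 0 = 0"
  by simp

lemma qabs_one [simp]: "qabs 1 = 1"
  by (simp add: qabs_def one_quat_def)

lemma qabs_quat_of_real [simp]: "qabs (quat_of_real c) = \<bar>c\<bar>"
  by (simp add: qabs_def quat_of_real_def)

lemma qabs_qcnj [simp]: "qabs (qcnj q) = qabs q"
  by (simp add: qabs_def qcnj_def)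

text \<open>Euler's four-square identity.\<close>
lemma qabs_mult: "qabs (a * b) = qabs a * qabs b"
  unfolding qabs_def real_sqrt_mult [symmetric]
  by (rule arg_cong [where f = sqrt]) (simp add: times_quat_def power2_eq_square algebra_simps)

lemma qabs_triangle: "qabs (a + b) \<le> qabs a + qabs b"
proof -
  define vec :: "quat \<Rightarrow> (real \<times> real) \<times> real \<times> real"
    where "vec q = ((Re q, Im1 q), (Im2 q, Im3 q))" for q
  have "qabs q = norm (vec q)" for q
    by (simp add: qabs_def vec_def norm_prod_def add.assoc)
  moreover have "vec (a + b) = vec a + vec b"
    by (simp add: vec_def plus_quat_def)
  ultimately show ?thesis
    by (simp add: norm_triangle_ineq)
qed

lemma qabs_sum_le: "qabs (\<Sum>i\<in>I. f i) \<le> (\<Sum>i\<in>I. qabs (f i))"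
proof (induct I rule: infinite_finite_induct)
  case (insert x F)
  then show ?case
    using qabs_triangle [of "f x" "sum f F"] by simp
qed simp_all

lemma unit_qcnj_mult_self: "qabs u = 1 \<Longrightarrow> qcnj u * u = 1"
  by (simp add: qcnj_mult_self)

instantiation quat :: division_ring
begin

definition inverse_quat :: "quat \<Rightarrow> quat" where
  "inverse q = quat_of_real (inverse ((qabs q)\<^sup>2)) * qcnj q"

definition divide_quat :: "quat \<Rightarrow> quat \<Rightarrow> quat" where
  "divide_quat a b = a * inverse b"

instance
proof
  fix a :: quat
  assume "a \<noteq> 0"
  then have nz: "inverse ((qabs a)\<^sup>2) * (qabs a)\<^sup>2 = 1"
    by simp
  show "inverse a * a = 1"
    unfolding inverse_quat_def mult.assoc qcnj_mult_self
    by (simp only: quat_of_real_mult [symmetric] nz quat_of_real_1)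
  show "a * inverse a = 1"
    unfolding inverse_quat_def mult.assoc [symmetric] quat_of_real_commute [of _ a, symmetric]
    unfolding mult.assoc mult_qcnj_self
    by (simp only: quat_of_real_mult [symmetric] nz quat_of_real_1)
qed (simp_all add: inverse_quat_def divide_quat_def)

end

lemma qabs_inverse: "qabs (inverse q) = inverse (qabs q)"
  by (cases "q = 0") (simp_all add: inverse_quat_def qabs_mult power2_eq_square)

lemma qcnj_scaled_sandwich:
  "qcnj (quat_of_real g * a) * M * (quat_of_real h * b) = quat_of_real (g * h) * (qcnj a * M * b)"
proof -
  have "qcnj (quat_of_real g * a) = quat_of_real g * qcnj a"
    by (simp add: qcnj_mult quat_of_real_commute)
  then have "qcnj (quat_of_real g * a) * M * (quat_of_real h * b) =
      quat_of_real g * ((qcnj a * M) * quat_of_real h) * b"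
    by (simp add: mult.assoc)
  also have "\<dots> = quat_of_real g * (quat_of_real h * (qcnj a * M)) * b"
    by (simp only: quat_of_real_commute [of h "qcnj a * M", symmetric])
  also have "\<dots> = quat_of_real g * quat_of_real h * (qcnj a * M * b)"
    by (simp only: mult.assoc)
  finally show ?thesis
    by (simp only: quat_of_real_mult)
qed

lemma quat_polar:
  obtains p where "qabs p = 1" "q = quat_of_real (qabs q) * p"
proof (cases "q = 0")
  case True
  then show ?thesis
    by (intro that [of 1]) simp_all
next
  case False
  then show ?thesis
    by (intro that [of "inverse (quat_of_real (qabs q)) * q"])
      (simp_all add: qabs_mult qabs_inverse right_inverse mult.assoc [symmetric])
qed

lemma exists_unit_right_factor:
  assumes "M \<noteq> 0" "qabs a = 1" "qabs p = 1"
  shows "\<exists>b. qabs b = 1 \<and> qcnj a * M * b = quat_of_real (qabs M) * p"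
proof (intro exI conjI)
  let ?b = "inverse M * a * quat_of_real (qabs M) * p"
  show "qabs ?b = 1"
    using assms by (simp add: qabs_mult qabs_inverse)
  have "qcnj a * M * ?b = qcnj a * (M * inverse M) * a * quat_of_real (qabs M) * p"
    by (simp add: mult.assoc)
  then show "qcnj a * M * ?b = quat_of_real (qabs M) * p"
    using assms by (simp add: unit_qcnj_mult_self mult.assoc)
qed

lemma exists_unit_left_factor:
  assumes "M \<noteq> 0" "qabs a = 1" "qabs p = 1"
  shows "\<exists>b. qabs b = 1 \<and> qcnj b * M * a = quat_of_real (qabs M) * p"
proof (intro exI conjI)
  let ?b = "qcnj (quat_of_real (qabs M) * p * qcnj a * inverse M)"
  show "qabs ?b = 1"
    using assms by (simp add: qabs_mult qabs_inverse)
  have "qcnj ?b * M * a = quat_of_real (qabs M) * p * qcnj a * (inverse M * M) * a"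
    by (simp add: mult.assoc)
  then show "qcnj ?b * M * a = quat_of_real (qabs M) * p"
    using assms by (simp add: unit_qcnj_mult_self mult.assoc)
qed

section \<open>Trees\<close>

lemma gadj_commute: "gadj A i j = gadj A j i"
  by (auto simp: gadj_def)

lemma tree_diagonal_zero: "is_tree n A \<Longrightarrow> k < n \<Longrightarrow> A k k = 0"
  by (auto simp: is_tree_def has_cycle_def gadj_def)

definition walk :: "qmat \<Rightarrow> nat set \<Rightarrow> nat \<Rightarrow> nat \<Rightarrow> nat list \<Rightarrow> bool" where
  "walk A S x y ws \<longleftrightarrow>
     ws \<noteq> [] \<and> hd ws = x \<and> last ws = y \<and> set ws \<subseteq> S \<and> successively (gadj A) ws"

lemma walk_rev: "walk A S x y ws \<Longrightarrow> walk A S y x (rev ws)"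
  by (auto simp: walk_def hd_rev last_rev gadj_commute)

lemma walk_snoc: "walk A S x y ws \<Longrightarrow> gadj A y z \<Longrightarrow> z \<in> S \<Longrightarrow> walk A S x z (ws @ [z])"
  by (auto simp: walk_def successively_append_iff)

lemma walk_mono: "walk A S x y ws \<Longrightarrow> S \<subseteq> T \<Longrightarrow> walk A T x y ws"
  by (auto simp: walk_def)

lemma walk_append: "walk A S x y ws \<Longrightarrow> walk A S y z vs \<Longrightarrow> walk A S x z (ws @ tl vs)"
  by (cases vs; cases "tl vs")
    (auto simp: walk_def successively_append_iff successively_Cons last_append)

lemma walk_shortcut:
  assumes "walk A S x y (xs @ [z] @ ys @ [z] @ zs)"
  shows "walk A S x y (xs @ [z] @ zs)"
proof -
  have "successively (gadj A) ((xs @ [z]) @ (ys @ [z] @ zs))"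
    and "successively (gadj A) ((xs @ [z] @ ys) @ (z # zs))"
    using assms by (simp_all add: walk_def)
  then have "successively (gadj A) (xs @ [z])" and "successively (gadj A) (z # zs)"
    by (simp_all only: successively_append_iff)
  then have "successively (gadj A) ((xs @ [z]) @ zs)"
    by (subst successively_append_iff) (auto simp: successively_Cons)
  moreover have "hd (xs @ [z] @ zs) = x"
    using assms by (cases xs) (auto simp: walk_def)
  moreover have "last (xs @ [z] @ zs) = y"
    using assms by (cases zs rule: rev_cases) (auto simp: walk_def)
  ultimately show ?thesis
    using assms by (auto simp: walk_def)
qed

lemma walk_distinct:
  assumes "walk A S x y ws"
  obtains vs where "walk A S x y vs" "distinct vs"
proof -
  obtain vs where vs: "walk A S x y vs"
    and shortest: "\<And>us. walk A S x y us \<Longrightarrow> length vs \<le> length us"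
    using ex_has_least_nat [of "walk A S x y" ws length] assms by blast
  have "distinct vs"
  proof (rule ccontr)
    assume "\<not> distinct vs"
    then obtain xs z ys zs where "vs = xs @ [z] @ ys @ [z] @ zs"
      using not_distinct_decomp by blast
    with shortest [OF walk_shortcut] vs show False
      by fastforce
  qed
  with vs show ?thesis
    by (rule that)
qed

definition rooted_connected :: "nat \<Rightarrow> qmat \<Rightarrow> nat set \<Rightarrow> bool" where
  "rooted_connected n A S \<longleftrightarrow> S \<subseteq> {..<n} \<and> 0 \<in> S \<and> (\<forall>v\<in>S. \<exists>ws. walk A S 0 v ws)"

lemma rooted_connected_singleton: "0 < n \<Longrightarrow> rooted_connected n A {0}"
  by (auto simp: rooted_connected_def walk_def intro!: exI [of _ "[0]"])

lemma rooted_connected_insert: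
  assumes S: "rooted_connected n A S" and "i \<in> S" "j < n" "gadj A i j"
  shows "rooted_connected n A (insert j S)"
  unfolding rooted_connected_def
proof (intro conjI ballI)
  fix v
  assume "v \<in> insert j S"
  then consider "v = j" | "v \<in> S"
    by blast
  then show "\<exists>ws. walk A (insert j S) 0 v ws"
  proof cases
    case 1
    obtain ws where "walk A S 0 i ws"
      using S \<open>i \<in> S\<close> by (auto simp: rooted_connected_def)
    then have "walk A (insert j S) 0 i ws"
      by (rule walk_mono) blast
    then have "walk A (insert j S) 0 j (ws @ [j])"
      using \<open>gadj A i j\<close> by (rule walk_snoc) simp
    with 1 show ?thesis
      by blast
  next
    case 2
    with S obtain ws where "walk A S 0 v ws"
      by (auto simp: rooted_connected_def)
    then have "walk A (insert j S) 0 v ws"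
      by (rule walk_mono) blast
    then show ?thesis ..
  qed
qed (use assms in \<open>auto simp: rooted_connected_def\<close>)

lemma has_cycle_of_walk:
  assumes "walk A S i k ws" "i \<noteq> k" "S \<subseteq> {..<n}" "j < n" "j \<notin> S"
    and "gadj A i j" "gadj A k j"
  shows "has_cycle n A"
proof -
  obtain vs where vs: "walk A S i k vs" "distinct vs"
    using walk_distinct assms(1) by blast
  have "length vs \<ge> 2"
    using vs \<open>i \<noteq> k\<close> by (cases vs; cases "tl vs") (auto simp: walk_def)
  moreover have "distinct (vs @ [j])" "set (vs @ [j]) \<subseteq> {..<n}"
    using vs assms by (auto simp: walk_def)
  moreover have "successively (gadj A) (vs @ [j])"
    using vs \<open>gadj A k j\<close> by (auto simp: walk_def successively_append_iff)
  then have "\<forall>l. Suc l < length (vs @ [j]) \<longrightarrow> gadj A ((vs @ [j]) ! l) ((vs @ [j]) ! Suc l)"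
    by (simp only: successively_conv_nth)
  moreover have "gadj A (last (vs @ [j])) (hd (vs @ [j]))"
    using vs \<open>gadj A i j\<close> by (cases vs) (auto simp: walk_def gadj_commute)
  ultimately show ?thesis
    unfolding has_cycle_def by (intro disjI2 exI [of _ "vs @ [j]"]) simp
qed

lemma acyclic_unique_neighbour:
  assumes "\<not> has_cycle n A" "rooted_connected n A S" "j < n" "j \<notin> S"
    and "i \<in> S" "k \<in> S" "gadj A i j" "gadj A k j"
  shows "i = k"
proof (rule ccontr)
  assume "i \<noteq> k"
  obtain ws vs where "walk A S 0 i ws" "walk A S 0 k vs"
    using assms by (meson rooted_connected_def)
  then have "walk A S i k (rev ws @ tl vs)"
    by (intro walk_append walk_rev)
  moreover note \<open>i \<noteq> k\<close>
  moreover have "S \<subseteq> {..<n}"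
    using assms by (simp add: rooted_connected_def)
  ultimately have "has_cycle n A"
    using assms(3,4,7,8) by (rule has_cycle_of_walk)
  with assms show False
    by blast
qed

lemma connected_exists_leaving_edge:
  assumes "graph_connected n A" "rooted_connected n A S" "S \<noteq> {..<n}"
  obtains i j where "i \<in> S" "j < n" "j \<notin> S" "gadj A i j"
proof -
  let ?E = "{(u, v). u < n \<and> v < n \<and> gadj A u v}"
  obtain y where "y < n" "y \<notin> S"
    using assms by (auto simp: rooted_connected_def)
  have "(0, y) \<in> ?E\<^sup>*"
    using assms \<open>y < n\<close> by (auto simp: graph_connected_def rooted_connected_def)
  moreover have "0 \<in> S"
    using assms by (simp add: rooted_connected_def)
  ultimately have "\<exists>i j. (i, j) \<in> ?E \<and> i \<in> S \<and> j \<notin> S"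
    using \<open>y \<notin> S\<close> by (induct rule: rtrancl_induct) auto
  with that show ?thesis
    by blast
qed

definition edge_consistent ::
    "qmat \<Rightarrow> ('a \<Rightarrow> bool) \<Rightarrow> (nat \<Rightarrow> nat \<Rightarrow> 'a \<Rightarrow> 'a \<Rightarrow> bool) \<Rightarrow> nat set \<Rightarrow> (nat \<Rightarrow> 'a) \<Rightarrow> bool"
  where "edge_consistent A P R S u \<longleftrightarrow>
    (\<forall>v\<in>S. P (u v)) \<and> (\<forall>i\<in>S. \<forall>j\<in>S. gadj A i j \<longrightarrow> R i j (u i) (u j))"

lemma edge_consistent_insert:
  assumes acyclic: "\<not> has_cycle n A" and S: "rooted_connected n A S"
    and u: "edge_consistent A P R S u"
    and ij: "i \<in> S" "j < n" "j \<notin> S" "gadj A i j" "\<not> gadj A j j"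
    and b: "P b" "R i j (u i) b"
    and R_sym: "\<And>a b. R i j a b \<Longrightarrow> R j i b a"
  shows "edge_consistent A P R (insert j S) (u(j := b))"
proof -
  have only_i: "k = i" if "k \<in> S" "gadj A k j" for k
    using acyclic_unique_neighbour [OF acyclic S ij(2,3) that(1) ij(1) that(2) ij(4)] .
  have "R k l ((u(j := b)) k) ((u(j := b)) l)"
    if "k \<in> insert j S" "l \<in> insert j S" "gadj A k l" for k l
  proof (cases "k = j"; cases "l = j")
    assume "k = j" "l \<noteq> j"
    then have "l = i"
      using that only_i [of l] by (simp add: gadj_commute)
    with \<open>k = j\<close> \<open>j \<notin> S\<close> ij(1) show ?thesis
      using R_sym [OF b(2)] by auto
  next
    assume "k \<noteq> j" "l = j"
    then have "k = i"
      using that only_i by blast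
    with \<open>l = j\<close> \<open>j \<notin> S\<close> ij(1) b(2) show ?thesis
      by auto
  next
    assume "k \<noteq> j" "l \<noteq> j"
    with that u show ?thesis
      by (simp add: edge_consistent_def)
  qed (use that ij(5) in simp)
  with u b(1) show ?thesis
    by (simp add: edge_consistent_def)
qed

text \<open>
  A consistently labelled rooted connected set of maximal size is everything: otherwise a
  leaving edge extends it, and acyclicity makes that edge the new vertex's only link to it.\<close>
lemma tree_edge_consistent_labelling:
  assumes tree: "is_tree n A" and "0 < n" and "\<exists>a. P a"
    and extend: "\<And>i j a. i < n \<Longrightarrow> j < n \<Longrightarrow> gadj A i j \<Longrightarrow> i \<noteq> j \<Longrightarrow> P a \<Longrightarrow>
      \<exists>b. P b \<and> R i j a b"
    and R_sym: "\<And>i j a b. R i j a b \<Longrightarrow> R j i b a"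
  obtains u where "edge_consistent A P R {..<n} u"
proof -
  have acyclic: "\<not> has_cycle n A" and connected: "graph_connected n A"
    using tree by (simp_all add: is_tree_def)
  have no_loop: "\<not> gadj A v v" if "v < n" for v
    using acyclic that by (auto simp: has_cycle_def)
  define good where "good S \<longleftrightarrow> rooted_connected n A S \<and> (\<exists>u. edge_consistent A P R S u)"
    for S
  obtain a where "P a"
    using assms(3) by blast
  then have "edge_consistent A P R {0} (\<lambda>_. a)"
    using \<open>0 < n\<close> no_loop by (simp add: edge_consistent_def)
  then have "good {0}"
    using \<open>0 < n\<close> by (auto simp: good_def rooted_connected_singleton)
  moreover have "card S < Suc n" if "good S" for S
    using that card_mono [of "{..<n}" S] by (simp add: good_def rooted_connected_def)
  ultimately obtain S where "good S" and maximal: "\<And>T. good T \<Longrightarrow> card T \<le> card S"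
    using ex_has_greatest_nat [of good "{0}" card "Suc n"] by blast
  then obtain u where S: "rooted_connected n A S" and u: "edge_consistent A P R S u"
    by (auto simp: good_def)
  have "S = {..<n}"
  proof (rule ccontr)
    assume "S \<noteq> {..<n}"
    then obtain i j where ij: "i \<in> S" "j < n" "j \<notin> S" "gadj A i j"
      using connected_exists_leaving_edge [OF connected S] by blast
    moreover have "i < n" "P (u i)"
      using S u ij(1) by (auto simp: rooted_connected_def edge_consistent_def)
    ultimately obtain b where b: "P b" "R i j (u i) b"
      using extend [of i j "u i"] by blast
    have "good (insert j S)"
      unfolding good_def
      using edge_consistent_insert [OF acyclic S u ij no_loop [OF ij(2)] b R_sym]
        rooted_connected_insert [OF S ij(1,2,4)] by blast
    then have "card (insert j S) \<le> card S"
      by (rule maximal)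
    moreover have "finite S"
      using S finite_subset by (auto simp: rooted_connected_def)
    ultimately show False
      using \<open>j \<notin> S\<close> by simp
  qed
  with u that show ?thesis
    by blast
qed

section \<open>The form \<open>\<Sum>\<^sub>i\<^sub>,\<^sub>j \<beta>\<^sub>i \<beta>\<^sub>j |a\<^sub>i\<^sub>j|\<close> on the nonnegative sphere\<close>

definition abs_form :: "nat \<Rightarrow> qmat \<Rightarrow> (nat \<Rightarrow> real) \<Rightarrow> real" where
  "abs_form n A \<beta> = (\<Sum>i<n. \<Sum>j<n. \<beta> i * \<beta> j * qabs (A i j))"

lemma pos_sphere_iff: "\<beta> \<in> pos_sphere n \<longleftrightarrow> (\<Sum>i<n. (\<beta> i)\<^sup>2) = 1 \<and> (\<forall>i<n. 0 \<le> \<beta> i)"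
  by (simp add: pos_sphere_def)

lemma pos_sphere_le_1:
  assumes "\<beta> \<in> pos_sphere n" "i < n"
  shows "\<beta> i \<le> 1"
proof -
  have "(\<beta> i)\<^sup>2 \<le> (\<Sum>i<n. (\<beta> i)\<^sup>2)"
    using assms(2) by (intro member_le_sum) auto
  with assms show ?thesis
    by (auto simp: pos_sphere_iff abs_square_le_1 abs_le_iff)
qed

lemma continuous_on_coordinate [continuous_intros]:
  "continuous_on S (\<lambda>x :: 'a \<Rightarrow> 'b :: topological_space. x i)"
  by (rule continuous_on_product_then_coordinatewise [OF continuous_on_id])

lemma continuous_on_abs_form: "continuous_on S (abs_form n A)"
  unfolding abs_form_def by (intro continuous_intros)

text \<open>
  \<open>pos_sphere n\<close> itself is not compact: it leaves the coordinates \<open>\<ge> n\<close> unconstrained.\<close>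
lemma compact_pos_sphere_supported: "compact {\<beta> \<in> pos_sphere n. \<forall>i\<ge>n. \<beta> i = 0}"
proof -
  define box :: "(nat \<Rightarrow> real) set" where "box = Pi\<^sub>E UNIV (\<lambda>i. if i < n then {0..1} else {0})"
  have "compactin (product_topology (\<lambda>i. euclidean) UNIV) box"
    unfolding box_def compactin_PiE by simp
  then have "compact box"
    by (simp add: euclidean_product_topology)
  moreover have "closed {\<beta> :: nat \<Rightarrow> real. (\<Sum>i<n. (\<beta> i)\<^sup>2) = 1}"
    by (intro closed_Collect_eq continuous_on_sum continuous_on_power continuous_on_coordinate
        continuous_on_const)
  moreover have "\<beta> \<in> box \<longleftrightarrow> (\<forall>i<n. 0 \<le> \<beta> i \<and> \<beta> i \<le> 1) \<and> (\<forall>i\<ge>n. \<beta> i = 0)" for \<beta>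
    by (auto simp: box_def PiE_iff not_less)
  then have "{\<beta> \<in> pos_sphere n. \<forall>i\<ge>n. \<beta> i = 0} = box \<inter> {\<beta>. (\<Sum>i<n. (\<beta> i)\<^sup>2) = 1}"
    using pos_sphere_le_1 by (auto simp: pos_sphere_iff)
  ultimately show ?thesis
    by (simp add: compact_Int_closed)
qed

lemma unit_vector_in_pos_sphere:
  assumes "k < n"
  shows "(\<lambda>i. if i = k then 1 else 0) \<in> pos_sphere n"
proof -
  have "(\<Sum>i<n. (if i = k then 1 else 0 :: real)\<^sup>2) = (\<Sum>i<n. if i = k then 1 else 0)"
    by (rule sum.cong) auto
  with assms show ?thesis
    by (simp add: pos_sphere_iff)
qed

lemma normalised_in_pos_sphere:
  assumes "\<forall>i<n. 0 \<le> v i" "0 < (\<Sum>i<n. (v i)\<^sup>2)"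
  shows "(\<lambda>i. v i / sqrt (\<Sum>i<n. (v i)\<^sup>2)) \<in> pos_sphere n"
proof -
  have "(\<Sum>i<n. (v i)\<^sup>2 / (\<Sum>i<n. (v i)\<^sup>2)) = 1"
    using assms(2) by (simp flip: sum_divide_distrib)
  with assms show ?thesis
    by (simp add: pos_sphere_iff power_divide)
qed

lemma abs_form_attains_max:
  assumes "0 < n"
  obtains \<beta> where "\<beta> \<in> pos_sphere n" "\<And>\<gamma>. \<gamma> \<in> pos_sphere n \<Longrightarrow> abs_form n A \<gamma> \<le> abs_form n A \<beta>"
proof -
  let ?K = "{\<beta> \<in> pos_sphere n. \<forall>i\<ge>n. \<beta> i = 0}"
  have "(\<lambda>i. if i = 0 then 1 else 0) \<in> ?K"
    using assms unit_vector_in_pos_sphere [OF assms] by simp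
  then have "\<exists>\<beta>\<in>?K. \<forall>\<gamma>\<in>?K. abs_form n A \<gamma> \<le> abs_form n A \<beta>"
    by (intro continuous_attains_sup compact_pos_sphere_supported continuous_on_abs_form) blast
  then obtain \<beta> where \<beta>: "\<beta> \<in> ?K" and max: "\<forall>\<gamma>\<in>?K. abs_form n A \<gamma> \<le> abs_form n A \<beta>"
    ..
  have "abs_form n A \<gamma> \<le> abs_form n A \<beta>" if "\<gamma> \<in> pos_sphere n" for \<gamma>
  proof -
    let ?\<gamma>' = "\<lambda>i. if i < n then \<gamma> i else 0"
    have "?\<gamma>' \<in> ?K"
      using that by (simp add: pos_sphere_iff)
    with max have "abs_form n A ?\<gamma>' \<le> abs_form n A \<beta>"
      by blast
    moreover have "abs_form n A ?\<gamma>' = abs_form n A \<gamma>"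
      by (simp add: abs_form_def)
    ultimately show ?thesis
      by simp
  qed
  with \<beta> that show ?thesis
    by blast
qed

lemma abs_form_unit_vector:
  assumes "k < n"
  shows "abs_form n A (\<lambda>i. if i = k then 1 else 0) = qabs (A k k)"
proof -
  have "(if i = k then 1 else 0) * (if j = k then 1 else 0) * qabs (A i j) =
      (if j = k then if i = k then qabs (A k k) else 0 else 0)" for i j
    by simp
  with assms show ?thesis
    by (simp add: abs_form_def)
qed

text \<open>
  Normalising the segment from the coordinate vector \<open>e\<^sub>k\<close>, a zero of the form, to \<open>\<beta>\<close>
  gives a path in the nonnegative sphere.\<close>
lemma abs_form_intermediate_value:
  assumes \<beta>: "\<beta> \<in> pos_sphere n" and "k < n" "A k k = 0"
    and s: "0 \<le> s" "s \<le> abs_form n A \<beta>"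
  obtains \<gamma> where "\<gamma> \<in> pos_sphere n" "abs_form n A \<gamma> = s"
proof -
  define e :: "nat \<Rightarrow> real" where "e = (\<lambda>i. if i = k then 1 else 0)"
  define v where "v t i = (1 - t) * e i + t * \<beta> i" for t i
  define N where "N t = (\<Sum>i<n. (v t i)\<^sup>2)" for t
  define g where "g t i = v t i / sqrt (N t)" for t i
  have \<beta>_nonneg: "0 \<le> \<beta> i" if "i < n" for i
    using \<beta> that by (simp add: pos_sphere_iff)
  have v_nonneg: "0 \<le> v t i" if "t \<in> {0..1}" "i < n" for t i
    using that \<beta>_nonneg [of i] by (auto simp: v_def e_def)
  have N_pos: "0 < N t" if t: "t \<in> {0..1}" for t
  proof (cases "t = 1")
    case True
    with \<beta> show ?thesis
      by (simp add: N_def v_def pos_sphere_iff)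
  next
    case False
    then have "0 < v t k"
      using t \<beta>_nonneg [OF \<open>k < n\<close>] by (auto simp: v_def e_def intro: add_pos_nonneg)
    then have "0 < (v t k)\<^sup>2"
      by simp
    also have "\<dots> \<le> N t"
      unfolding N_def using \<open>k < n\<close> by (intro member_le_sum) auto
    finally show ?thesis .
  qed
  have g_sphere: "g t \<in> pos_sphere n" if "t \<in> {0..1}" for t
    using normalised_in_pos_sphere [of n "v t"] N_pos v_nonneg that
    by (simp add: g_def [abs_def] N_def)
  have "\<forall>t\<in>{0..1}. sqrt (N t) \<noteq> 0"
    using N_pos by (metis less_irrefl real_sqrt_eq_zero_cancel_iff)
  then have "continuous_on {0..1} (\<lambda>t. abs_form n A (g t))"
    unfolding abs_form_def g_def v_def N_def by (intro continuous_intros ballI) auto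
  moreover have "N 0 = 1"
    using unit_vector_in_pos_sphere [OF \<open>k < n\<close>] by (simp add: N_def v_def e_def pos_sphere_iff)
  then have "g 0 = e"
    by (simp add: g_def v_def fun_eq_iff)
  then have "abs_form n A (g 0) = 0"
    using abs_form_unit_vector [OF \<open>k < n\<close>] \<open>A k k = 0\<close> by (simp add: e_def)
  moreover have "g 1 = \<beta>"
    using \<beta> by (simp add: g_def v_def N_def pos_sphere_iff fun_eq_iff)
  ultimately obtain t where "t \<in> {0..1}" "abs_form n A (g t) = s"
    using IVT' [of "\<lambda>t. abs_form n A (g t)" 0 s 1] s by auto
  with g_sphere that show ?thesis
    by blast
qed

section \<open>The numerical range\<close>

text \<open>
  The diagonal unitary similarity \<open>diag(u)\<^sup>* A diag(u)\<close> turns every nonzero entry \<open>a\<^sub>i\<^sub>j\<close>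
  into \<open>|a\<^sub>i\<^sub>j| p\<close>.\<close>
definition phase_aligning :: "nat \<Rightarrow> qmat \<Rightarrow> quat \<Rightarrow> qvec \<Rightarrow> bool" where
  "phase_aligning n A p u \<longleftrightarrow> (\<forall>i<n. qabs (u i) = 1) \<and>
     (\<forall>i<n. \<forall>j<n. A i j \<noteq> 0 \<longrightarrow> qcnj (u i) * A i j * u j = quat_of_real (qabs (A i j)) * p)"

lemma exists_unit_edge_factor:
  assumes ut: "upper_triangular n A" and "i < n" "j < n" "i \<noteq> j" "gadj A i j"
    and "qabs a = 1" "qabs p = 1"
  shows "\<exists>b. qabs b = 1 \<and>
    (A i j \<noteq> 0 \<longrightarrow> qcnj a * A i j * b = quat_of_real (qabs (A i j)) * p) \<and>
    (A j i \<noteq> 0 \<longrightarrow> qcnj b * A j i * a = quat_of_real (qabs (A j i)) * p)"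
proof (cases "A i j = 0")
  case True
  then have "A j i \<noteq> 0"
    using \<open>gadj A i j\<close> by (simp add: gadj_def)
  with True exists_unit_left_factor [OF _ \<open>qabs a = 1\<close> \<open>qabs p = 1\<close>] show ?thesis
    by simp
next
  case False
  moreover have "A j i = 0"
    using False assms(2-4) ut by (cases "i < j") (auto simp: upper_triangular_def)
  ultimately show ?thesis
    using exists_unit_right_factor [OF _ \<open>qabs a = 1\<close> \<open>qabs p = 1\<close>] by simp
qed

lemma tree_phase_aligning:
  assumes tree: "is_tree n A" and "0 < n" and ut: "upper_triangular n A" and "qabs p = 1"
  obtains u where "phase_aligning n A p u"
proof -
  \<comment> \<open>\<open>R\<close> covers both orientations of an edge to be symmetric; by upper triangularity
    only one of its conjuncts is ever active.\<close>
  define R where "R i j a b \<longleftrightarrow>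
      (A i j \<noteq> 0 \<longrightarrow> qcnj a * A i j * b = quat_of_real (qabs (A i j)) * p) \<and>
      (A j i \<noteq> 0 \<longrightarrow> qcnj b * A j i * a = quat_of_real (qabs (A j i)) * p)" for i j a b
  have "\<exists>a. qabs a = 1"
    by (intro exI [of _ 1]) simp
  moreover have "\<exists>b. qabs b = 1 \<and> R i j a b"
    if "i < n" "j < n" "gadj A i j" "i \<noteq> j" "qabs a = 1" for i j a
    using exists_unit_edge_factor [OF ut that(1,2,4,3,5) \<open>qabs p = 1\<close>] by (simp add: R_def)
  moreover have "R j i b a" if "R i j a b" for i j a b
    using that by (simp add: R_def)
  ultimately obtain u where u: "edge_consistent A (\<lambda>a. qabs a = 1) R {..<n} u"
    by (rule tree_edge_consistent_labelling [OF tree \<open>0 < n\<close>])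
  have "phase_aligning n A p u"
    unfolding phase_aligning_def
  proof (intro conjI allI impI)
    fix i j
    assume "i < n" "j < n" "A i j \<noteq> 0"
    then have "R i j (u i) (u j)"
      using u by (simp add: edge_consistent_def gadj_def)
    with \<open>A i j \<noteq> 0\<close> show "qcnj (u i) * A i j * u j = quat_of_real (qabs (A i j)) * p"
      by (simp add: R_def)
  qed (use u in \<open>simp add: edge_consistent_def\<close>)
  with that show ?thesis .
qed

definition quad_form :: "nat \<Rightarrow> qmat \<Rightarrow> qvec \<Rightarrow> quat" where
  "quad_form n A x = (\<Sum>i<n. \<Sum>j<n. qcnj (x i) * A i j * x j)"

lemma num_range_eq_image: "num_range n A = quad_form n A ` qsphere n"
  by (auto simp: num_range_def quad_form_def)

lemma qabs_quad_form_le: "qabs (quad_form n A x) \<le> abs_form n A (\<lambda>i. qabs (x i))"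
proof -
  have "qabs (quad_form n A x) \<le> (\<Sum>i<n. qabs (\<Sum>j<n. qcnj (x i) * A i j * x j))"
    unfolding quad_form_def by (rule qabs_sum_le)
  also have "\<dots> \<le> (\<Sum>i<n. \<Sum>j<n. qabs (qcnj (x i) * A i j * x j))"
    by (intro sum_mono qabs_sum_le)
  also have "\<dots> = abs_form n A (\<lambda>i. qabs (x i))"
    by (simp add: abs_form_def qabs_mult mult.commute mult.left_commute)
  finally show ?thesis .
qed

lemma qsphere_moduli_in_pos_sphere: "x \<in> qsphere n \<Longrightarrow> (\<lambda>i. qabs (x i)) \<in> pos_sphere n"
  by (simp add: qsphere_def pos_sphere_iff qcnj_mult_self quat_of_real_sum [symmetric]
      flip: quat_of_real_1)

lemma scaled_phase_aligning_in_qsphere: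
  assumes "phase_aligning n A p u" "\<gamma> \<in> pos_sphere n"
  shows "(\<lambda>i. quat_of_real (\<gamma> i) * u i) \<in> qsphere n"
proof -
  have "qcnj (quat_of_real (\<gamma> i) * u i) * 1 * (quat_of_real (\<gamma> i) * u i) = quat_of_real ((\<gamma> i)\<^sup>2)"
    if "i < n" for i
    using assms(1) that
    by (simp only: qcnj_scaled_sandwich) (simp add: phase_aligning_def unit_qcnj_mult_self power2_eq_square)
  with assms(2) show ?thesis
    by (simp add: qsphere_def pos_sphere_iff quat_of_real_sum [symmetric])
qed

lemma quad_form_scaled_phase_aligning:
  assumes "phase_aligning n A p u"
  shows "quad_form n A (\<lambda>i. quat_of_real (\<gamma> i) * u i) = quat_of_real (abs_form n A \<gamma>) * p"
proof -
  have "qcnj (quat_of_real (\<gamma> i) * u i) * A i j * (quat_of_real (\<gamma> j) * u j) =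
      quat_of_real (\<gamma> i * \<gamma> j * qabs (A i j)) * p" if "i < n" "j < n" for i j
  proof (cases "A i j = 0")
    case False
    have "qcnj (quat_of_real (\<gamma> i) * u i) * A i j * (quat_of_real (\<gamma> j) * u j) =
        quat_of_real (\<gamma> i * \<gamma> j) * (qcnj (u i) * A i j * u j)"
      by (rule qcnj_scaled_sandwich)
    also have "\<dots> = quat_of_real (\<gamma> i * \<gamma> j) * (quat_of_real (qabs (A i j)) * p)"
      using assms that False by (simp add: phase_aligning_def)
    finally show ?thesis
      by (simp add: quat_of_real_mult mult.assoc)
  qed simp
  then show ?thesis
    by (simp add: quad_form_def abs_form_def quat_of_real_sum sum_distrib_right)
qed

lemma num_range_subset_qdisk:
  assumes "\<And>\<beta>. \<beta> \<in> pos_sphere n \<Longrightarrow> abs_form n A \<beta> \<le> r"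
  shows "num_range n A \<subseteq> qdisk 0 r"
proof
  fix q
  assume "q \<in> num_range n A"
  then obtain x where "x \<in> qsphere n" "q = quad_form n A x"
    by (auto simp: num_range_eq_image)
  then have "qabs q \<le> r"
    using order_trans [OF qabs_quad_form_le assms [OF qsphere_moduli_in_pos_sphere]] by simp
  then show "q \<in> qdisk 0 r"
    by (simp add: qdisk_def)
qed

lemma qdisk_subset_num_range:
  assumes tree: "is_tree n A" and "0 < n" and "upper_triangular n A" and \<beta>: "\<beta> \<in> pos_sphere n"
  shows "qdisk 0 (abs_form n A \<beta>) \<subseteq> num_range n A"
proof
  fix q
  assume "q \<in> qdisk 0 (abs_form n A \<beta>)"
  then have "qabs q \<le> abs_form n A \<beta>"
    by (simp add: qdisk_def)
  then obtain \<gamma> where \<gamma>: "\<gamma> \<in> pos_sphere n" and "abs_form n A \<gamma> = qabs q"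
    by (rule abs_form_intermediate_value [where A = A,
          OF \<beta> \<open>0 < n\<close> tree_diagonal_zero [OF tree \<open>0 < n\<close>] qabs_nonneg])
  moreover obtain p where "qabs p = 1" and q: "q = quat_of_real (qabs q) * p"
    by (rule quat_polar)
  moreover obtain u where u: "phase_aligning n A p u"
    using tree_phase_aligning [OF assms(1-3) \<open>qabs p = 1\<close>] .
  ultimately have "q = quad_form n A (\<lambda>i. quat_of_real (\<gamma> i) * u i)"
    by (simp add: quad_form_scaled_phase_aligning)
  with scaled_phase_aligning_in_qsphere [OF u \<gamma>] show "q \<in> num_range n A"
    by (auto simp: num_range_eq_image)
qed

theorem theorem3p5:
  fixes n :: nat and A :: "nat \<Rightarrow> nat \<Rightarrow> quat"
  assumes "n \<ge> 1"
    and "upper_triangular n A"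
    and "nilpotent n A"
    and "is_tree n A"
  shows "num_range n A =
           qdisk 0 (Sup ((\<lambda>\<beta>. \<Sum>i<n. \<Sum>j<n. \<beta> i * \<beta> j * qabs (A i j)) ` pos_sphere n))"
proof -
  have "0 < n"
    using assms(1) by simp
  then obtain \<beta> where \<beta>: "\<beta> \<in> pos_sphere n"
    and max: "\<And>\<gamma>. \<gamma> \<in> pos_sphere n \<Longrightarrow> abs_form n A \<gamma> \<le> abs_form n A \<beta>"
    using abs_form_attains_max [where A = A] by blast
  have "Sup ((\<lambda>\<beta>. \<Sum>i<n. \<Sum>j<n. \<beta> i * \<beta> j * qabs (A i j)) ` pos_sphere n) =
      abs_form n A \<beta>"
    using \<beta> max by (intro cSup_eq_maximum) (auto simp: abs_form_def)
  with num_range_subset_qdisk [OF max] qdisk_subset_num_range [OF assms(4) \<open>0 < n\<close> assms(2) \<beta>]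
  show ?thesis
    by simp
qed

end
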